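(* Let $A$ be Hurwitz and let $M_{\rm initial},\sigma_{\rm slowest}>0$ satisfy $\|e^{At}\|_2\le M_{\rm initial}e^{-\sigma_{\rm slowest}t}$ for all $t\ge0$. Let $\widetilde M_{\rm loose}=2M_{\rm initial}\|B\|_2/\sigma_{\rm slowest}$ and $\mathcal{B}_{\rm ultimate}=\{x\in\mathbb{R}^n:\|x\|_2\le\widetilde M_{\rm loose}\}$. Let $x(\cdot)$ be a trajectory of the relay feedback system $\dot x=Ax-B\,\mathrm{sign}(Cx)$ with $x(0)\in\mathcal{B}_{\rm ultimate}$. Then for all times $t$ greater than $t_{\rm excursions\text{-}over}=\frac{1}{\sigma_{\rm slowest}}\log(2M_{\rm initial})$, $x(t)\in\mathcal{B}_{\rm ultimate}$ (although at earlier times the state may leave $\mathcal{B}_{\rm ultimate}$).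
   Context: $A$ is the $n\times n$ observer canonical matrix ($A_{i+1,i}=1$ for $i=1,\dots,n-1$, last column $(-a_0,\dots,-a_{n-1})^T$, other entries zero), $B=(b_0,\dots,b_{n-1})^T$, $C=(0,\dots,0,1)$. $\mathrm{sign}(e)=1$ for $e>0$, $-1$ for $e<0$, and $[-1,1]$ for $e=0$; trajectories are (Filippov) solutions, and on the switching set one uses non-sliding solutions. *)

theory Defs
  imports "HOL-Analysis.Analysis"
begin

definition idx_pos :: "'n::{finite,linorder} \<Rightarrow> nat" where
  "idx_pos i = card {j. j < i}"

(* Observer canonical matrix: A_{i+1,i} = 1, last column (-a_0,...,-a_{n-1})^T, else 0
   (positions are 0-based here, the last index is the maximum of the order, so row position r corresponds to row r+1 of the paper). *)
definition obs_canon :: "(nat \<Rightarrow> real) \<Rightarrow> real^('n::{finite,linorder})^('n::{finite,linorder})" where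
  "obs_canon a = (\<chi> i j.
      (if idx_pos i = idx_pos j + 1 then 1 else 0)
    + (if (\<forall>k. k \<le> j) then - a (idx_pos i) else 0))"

definition obs_B :: "(nat \<Rightarrow> real) \<Rightarrow> real^'n::{finite,linorder}" where
  "obs_B b = (\<chi> i. b (idx_pos i))"

(* C x = last component of x, i.e. C = (0,...,0,1) *)
definition obs_C :: "real^'n::{finite,linorder} \<Rightarrow> real" where
  "obs_C x = (\<Sum>i\<in>UNIV. (if (\<forall>k. k \<le> i) then 1 else 0) * x $ i)"

definition hurwitz :: "real^('n::finite)^('n::finite) \<Rightarrow> bool" where
  "hurwitz A \<longleftrightarrow> (\<forall>(lam::complex) (v::complex^'n). v \<noteq> 0 \<and>
      (\<chi> i j. complex_of_real (A $ i $ j)) *v v = lam *s v \<longrightarrow> Re lam < 0)"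

fun mpow :: "real^('n::finite)^('n::finite) \<Rightarrow> nat \<Rightarrow> real^'n^'n" where
  "mpow A 0 = mat 1"
| "mpow A (Suc k) = A ** mpow A k"

definition mexp :: "real^('n::finite)^('n::finite) \<Rightarrow> real^'n^'n" where
  "mexp A = (\<Sum>k. (1 / fact k) *\<^sub>R mpow A k)"

definition mnorm2 :: "real^('n::finite)^('n::finite) \<Rightarrow> real" where
  "mnorm2 M = onorm (\<lambda>v. M *v v)"

definition sign_set :: "real \<Rightarrow> real set" where
  "sign_set e = (if e > 0 then {1} else if e < 0 then {-1} else {-1..1})"

(* (Filippov) solution of  x' = A x - B sign(C x)  on [0,\<infinity>):
   absolutely continuous x with x' (t) \<in> A x(t) - B sign(C x(t)) a.e., written in
   integral form with a selection u(s) \<in> sign(C x(s)). *)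
definition relay_solution ::
  "real^('n::finite)^('n::finite) \<Rightarrow> real^'n \<Rightarrow> (real^'n \<Rightarrow> real) \<Rightarrow> (real \<Rightarrow> real^'n) \<Rightarrow> bool" where
  "relay_solution A B C x \<longleftrightarrow> (\<exists>u::real \<Rightarrow> real.
      (\<forall>s\<ge>0. u s \<in> sign_set (C (x s))) \<and>
      (\<forall>t\<ge>0. ((\<lambda>s. A *v x s - u s *\<^sub>R B) has_integral (x t - x 0)) {0..t}))"

end

(*
  Along a trajectory the relay input is a selection u(s) of sign(C x(s)), so x solves
  x' = A x + v with |v| <= |B|. Variation of constants then gives
    |x(t)| <= M e^(-sigma t) |x(0)| + (M |B| / sigma) (1 - e^(-sigma t)),
  and once t > log(2M) / sigma the factor M e^(-sigma t) is below 1/2, so each of the two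
  terms is at most half the radius 2 M |B| / sigma.

  Nothing makes s |-> e^(A(t-s)) u(s) B integrable (u is an arbitrary selection), so the
  variation of constants estimate is not read off an integral formula. Instead
  w(s) = e^(A(t-s)) x(s) is shown to have right increments of rate at most
  M |B| e^(-sigma(t-s)), and a right-Dini mean value inequality integrates this rate.
*)
theory Submission
  imports Defs
begin

section \<open>Endomorphisms of \<^typ>\<open>real^'n\<close> as a Banach algebra\<close>

text \<open>Matrices \<^typ>\<open>real^'n^'n\<close> carry the Frobenius norm and no multiplication, so
  exponentials and operator norms are taken in a copy of the bounded linear maps that is
  made a Banach algebra.\<close>

typedef (overloaded) ('n::finite) endo = "UNIV :: ((real^'n) \<Rightarrow>\<^sub>L (real^'n)) set"
  morphisms blinfun_of_endo endo_of_blinfun by simp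

setup_lifting type_definition_endo

instantiation endo :: (finite) real_normed_algebra_1
begin

lift_definition norm_endo :: "'a endo \<Rightarrow> real" is norm .
lift_definition minus_endo :: "'a endo \<Rightarrow> 'a endo \<Rightarrow> 'a endo" is "(-)" .
lift_definition plus_endo :: "'a endo \<Rightarrow> 'a endo \<Rightarrow> 'a endo" is "(+)" .
lift_definition uminus_endo :: "'a endo \<Rightarrow> 'a endo" is uminus .
lift_definition zero_endo :: "'a endo" is 0 .
lift_definition scaleR_endo :: "real \<Rightarrow> 'a endo \<Rightarrow> 'a endo" is scaleR .
lift_definition times_endo :: "'a endo \<Rightarrow> 'a endo \<Rightarrow> 'a endo" is blinfun_compose .
lift_definition one_endo :: "'a endo" is id_blinfun .

definition dist_endo :: "'a endo \<Rightarrow> 'a endo \<Rightarrow> real"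
  where "dist_endo S T = norm (S - T)"

definition uniformity_endo :: "('a endo \<times> 'a endo) filter"
  where "uniformity_endo = (INF e\<in>{0<..}. principal {(S, T). dist S T < e})"

definition open_endo :: "'a endo set \<Rightarrow> bool"
  where "open_endo U = (\<forall>S\<in>U. \<forall>\<^sub>F (S', T) in uniformity. S' = S \<longrightarrow> T \<in> U)"

definition sgn_endo :: "'a endo \<Rightarrow> 'a endo"
  where "sgn_endo S = inverse (norm S) *\<^sub>R S"

instance
proof
  fix S T U :: "'a endo" and a b :: real
  show "S + T + U = S + (T + U)" by transfer (simp add: add.assoc)
  show "S + T = T + S" by transfer (simp add: add.commute)
  show "0 + S = S" by transfer simp
  show "- S + S = 0" by transfer simp
  show "S - T = S + - T" by transfer simp
  show "a *\<^sub>R (S + T) = a *\<^sub>R S + a *\<^sub>R T" by transfer (simp add: scaleR_add_right)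
  show "(a + b) *\<^sub>R S = a *\<^sub>R S + b *\<^sub>R S" by transfer (simp add: scaleR_add_left)
  show "a *\<^sub>R b *\<^sub>R S = (a * b) *\<^sub>R S" by transfer simp
  show "1 *\<^sub>R S = S" by transfer simp
  show "a *\<^sub>R S * T = a *\<^sub>R (S * T)"
    by transfer (rule blinfun_eqI, simp add: blinfun.bilinear_simps)
  show "S * a *\<^sub>R T = a *\<^sub>R (S * T)"
    by transfer (rule blinfun_eqI, simp add: blinfun.bilinear_simps)
  show "S * T * U = S * (T * U)" by transfer (rule blinfun_eqI, simp)
  show "(S + T) * U = S * U + T * U"
    by transfer (rule blinfun_eqI, simp add: blinfun.bilinear_simps)
  show "S * (T + U) = S * T + S * U"
    by transfer (rule blinfun_eqI, simp add: blinfun.bilinear_simps)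
  show "1 * S = S" by transfer (rule blinfun_eqI, simp)
  show "S * 1 = S" by transfer (rule blinfun_eqI, simp)
  show "norm (S * T) \<le> norm S * norm T" by transfer (rule norm_blinfun_compose)
  show "norm (1::'a endo) = 1" by transfer simp
  then show "(0::'a endo) \<noteq> 1" by (metis zero_neq_one norm_endo.abs_eq zero_endo_def norm_zero)
  show "(norm S = 0) = (S = 0)" by transfer simp
  show "norm (S + T) \<le> norm S + norm T" by transfer (rule norm_triangle_ineq)
  show "norm (a *\<^sub>R S) = \<bar>a\<bar> * norm S" by transfer simp
  show "sgn S = inverse (norm S) *\<^sub>R S" by (simp add: sgn_endo_def)
  show "dist S T = norm (S - T)" by (simp add: dist_endo_def)
  show "(uniformity :: ('a endo \<times> 'a endo) filter) = (INF e\<in>{0<..}. principal {(S, T). dist S T < e})"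
    by (simp add: uniformity_endo_def)
  fix V :: "'a endo set"
  show "open V = (\<forall>S\<in>V. \<forall>\<^sub>F (S', T) in uniformity. S' = S \<longrightarrow> T \<in> V)"
    by (simp add: open_endo_def)
qed

end

instance endo :: (finite) banach
proof
  fix X :: "nat \<Rightarrow> 'a endo"
  have dist_eq: "dist (blinfun_of_endo S) (blinfun_of_endo T) = dist S T" for S T :: "'a endo"
    unfolding dist_norm by transfer simp
  assume "Cauchy X"
  then have "Cauchy (\<lambda>k. blinfun_of_endo (X k))"
    unfolding Cauchy_def dist_eq .
  then obtain L where "(\<lambda>k. blinfun_of_endo (X k)) \<longlonglongrightarrow> L"
    using convergent_eq_Cauchy by blast
  then have "X \<longlonglongrightarrow> endo_of_blinfun L"
    unfolding lim_sequentially by (metis dist_eq endo_of_blinfun_inverse UNIV_I)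
  then show "convergent X" by (auto simp: convergent_def)
qed

lift_definition endo_apply :: "'n::finite endo \<Rightarrow> real^'n \<Rightarrow> real^'n" is blinfun_apply .

lift_definition endo_of_matrix :: "real^'n^'n \<Rightarrow> 'n::finite endo" is "\<lambda>M. Blinfun (\<lambda>v. M *v v)" .

lemma bounded_bilinear_endo_apply: "bounded_bilinear endo_apply"
proof
  fix S T :: "'n::finite endo" and v w :: "real^'n" and r :: real
  show "endo_apply (S + T) v = endo_apply S v + endo_apply T v"
    by transfer (simp add: blinfun.bilinear_simps)
  show "endo_apply S (v + w) = endo_apply S v + endo_apply S w"
    by transfer (simp add: blinfun.bilinear_simps)
  show "endo_apply (r *\<^sub>R S) v = r *\<^sub>R endo_apply S v"
    by transfer (simp add: blinfun.bilinear_simps)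
  show "endo_apply S (r *\<^sub>R v) = r *\<^sub>R endo_apply S v"
    by transfer (simp add: blinfun.bilinear_simps)
  show "\<exists>K. \<forall>S v. norm (endo_apply S v) \<le> norm S * norm v * K"
    by (rule exI[of _ 1], transfer) (simp add: norm_blinfun)
qed

lemma norm_endo_apply: "norm (endo_apply S v) \<le> norm S * norm v"
  by transfer (rule norm_blinfun)

lemma endo_apply_times [simp]: "endo_apply (S * T) v = endo_apply S (endo_apply T v)"
  by transfer simp

lemma endo_apply_one [simp]: "endo_apply 1 v = v"
  by transfer simp

lemma endo_apply_endo_of_matrix [simp]: "endo_apply (endo_of_matrix M) v = M *v v"
  by transfer (simp add: bounded_linear_Blinfun_apply)

lemma endo_eqI: "(\<And>v. endo_apply S v = endo_apply T v) \<Longrightarrow> S = T"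
  by transfer (rule blinfun_eqI)

lemma norm_endo_of_matrix: "norm (endo_of_matrix M) = mnorm2 M"
  unfolding mnorm2_def by transfer (simp add: bounded_linear_Blinfun_apply norm_blinfun.rep_eq)

lemma endo_of_matrix_mpow: "endo_of_matrix (mpow M k) = endo_of_matrix M ^ k"
proof (induction k)
  case (Suc k)
  show ?case
    by (rule endo_eqI) (simp add: Suc.IH[symmetric] matrix_vector_mul_assoc[symmetric])
qed (auto intro: endo_eqI)

lemma endo_of_matrix_scaleR: "endo_of_matrix (a *\<^sub>R M) = a *\<^sub>R endo_of_matrix M"
  by (rule endo_eqI)
    (simp add: bounded_bilinear.scaleR_left[OF bounded_bilinear_endo_apply] scaleR_matrix_vector_assoc)

lemma sums_vecI:
  fixes f :: "nat \<Rightarrow> 'a::real_normed_vector^'n"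
  assumes "\<And>i. (\<lambda>k. f k $ i) sums (s $ i)"
  shows "f sums s"
  using assms unfolding sums_def by (intro vec_tendstoI) simp

lemma mexp_eq_matrix_exp:
  fixes M :: "real^'n::finite^'n"
  shows "mexp M = matrix (endo_apply (exp (endo_of_matrix M)))"
proof -
  let ?L = "endo_of_matrix M"
  have "(\<lambda>k. (1 / fact k) *\<^sub>R mpow M k) sums matrix (endo_apply (exp ?L))"
  proof (intro sums_vecI)
    fix i j :: 'n
    have "bounded_linear (\<lambda>S. endo_apply S (axis j 1) $ i)"
      by (intro bounded_linear_compose[OF bounded_linear_vec_nth]
          bounded_bilinear.bounded_linear_left[OF bounded_bilinear_endo_apply])
    from bounded_linear.sums[OF this exp_converges]
    have "(\<lambda>k. endo_apply (?L ^ k /\<^sub>R fact k) (axis j 1) $ i) sums (endo_apply (exp ?L) (axis j 1) $ i)" .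
    moreover have "endo_apply (?L ^ k /\<^sub>R fact k) (axis j 1) $ i = ((1 / fact k) *\<^sub>R mpow M k) $ i $ j" for k
      by (simp add: endo_of_matrix_mpow[symmetric] endo_of_matrix_scaleR[symmetric] divide_inverse_commute
          matrix_vector_mult_def axis_def if_distrib cong: if_cong)
    ultimately show "(\<lambda>k. ((1 / fact k) *\<^sub>R mpow M k) $ i $ j) sums (matrix (endo_apply (exp ?L)) $ i $ j)"
      by (simp add: matrix_def)
  qed
  then show ?thesis
    unfolding mexp_def by (rule sums_unique[symmetric])
qed

lemma endo_of_matrix_mexp: "endo_of_matrix (mexp M) = exp (endo_of_matrix M)"
proof (rule endo_eqI)
  have "linear (endo_apply (exp (endo_of_matrix M)))"
    by (rule bounded_linear.linear[OF bounded_bilinear.bounded_linear_right[OF bounded_bilinear_endo_apply]])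
  then show "endo_apply (endo_of_matrix (mexp M)) v = endo_apply (exp (endo_of_matrix M)) v" for v
    by (simp add: mexp_eq_matrix_exp matrix_works)
qed

lemma mnorm2_mexp: "mnorm2 (mexp M) = norm (exp (endo_of_matrix M))"
  by (simp add: endo_of_matrix_mexp flip: norm_endo_of_matrix)

lemma mnorm2_mexp_zero: "mnorm2 (mexp (0::real^'n::finite^'n)) = 1"
  using endo_of_matrix_scaleR[of 0 "0::real^'n^'n"] by (simp add: mnorm2_mexp)

lemma exp_scaleR_remainder_tendsto:
  fixes L :: "'a::{real_normed_algebra_1,banach}"
  shows "((\<lambda>h. norm (exp (h *\<^sub>R L) - 1 - h *\<^sub>R L) / h) \<longlongrightarrow> 0) (at_right 0)"
proof -
  have "((\<lambda>h. exp (h *\<^sub>R L)) has_derivative (\<lambda>h. h *\<^sub>R L)) (at 0)"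
    using exp_scaleR_has_vector_derivative_right[where t=0 and A=L and T=UNIV]
    by (simp add: has_vector_derivative_def)
  then have "((\<lambda>h. ((exp (h *\<^sub>R L) - exp (0 *\<^sub>R L)) - (h - 0) *\<^sub>R L) /\<^sub>R norm (h - 0)) \<longlongrightarrow> 0) (at 0)"
    unfolding has_derivative_at_within by blast
  then have "((\<lambda>h. norm ((exp (h *\<^sub>R L) - 1 - h *\<^sub>R L) /\<^sub>R \<bar>h\<bar>)) \<longlongrightarrow> 0) (at 0)"
    by (intro tendsto_norm_zero) simp
  then have "((\<lambda>h. norm ((exp (h *\<^sub>R L) - 1 - h *\<^sub>R L) /\<^sub>R \<bar>h\<bar>)) \<longlongrightarrow> 0) (at_right 0)"
    by (rule tendsto_mono[OF at_le, rotated]) simp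
  moreover have "eventually (\<lambda>h. norm ((exp (h *\<^sub>R L) - 1 - h *\<^sub>R L) /\<^sub>R \<bar>h\<bar>)
      = norm (exp (h *\<^sub>R L) - 1 - h *\<^sub>R L) / h) (at_right 0)"
    using eventually_at_right_less[of 0] by eventually_elim (simp add: divide_inverse_commute)
  ultimately show ?thesis by (rule Lim_transform_eventually)
qed

lemma norm_transport_increment_le:
  fixes L :: "'n::finite endo"
  shows "norm (endo_apply (exp (p *\<^sub>R L)) y - endo_apply (exp ((p + h) *\<^sub>R L)) z)
    \<le> norm (exp (p *\<^sub>R L)) * (norm (y - z - h *\<^sub>R endo_apply L z) + norm (exp (h *\<^sub>R L) - 1 - h *\<^sub>R L) * norm z)"
proof -
  have "exp ((p + h) *\<^sub>R L) = exp (p *\<^sub>R L) * exp (h *\<^sub>R L)"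
    by (simp add: scaleR_add_left exp_add_commuting)
  then have "endo_apply (exp (p *\<^sub>R L)) y - endo_apply (exp ((p + h) *\<^sub>R L)) z
      = endo_apply (exp (p *\<^sub>R L)) ((y - z - h *\<^sub>R endo_apply L z) - endo_apply (exp (h *\<^sub>R L) - 1 - h *\<^sub>R L) z)"
    by (simp add: bounded_bilinear.diff_left[OF bounded_bilinear_endo_apply]
        bounded_bilinear.diff_right[OF bounded_bilinear_endo_apply]
        bounded_bilinear.scaleR_left[OF bounded_bilinear_endo_apply])
  also have "norm \<dots> \<le> norm (exp (p *\<^sub>R L)) * (norm (y - z - h *\<^sub>R endo_apply L z) + norm (exp (h *\<^sub>R L) - 1 - h *\<^sub>R L) * norm z)"
    by (rule order_trans[OF norm_endo_apply mult_left_mono])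
      (auto intro: order_trans[OF norm_triangle_ineq4 add_left_mono] norm_endo_apply)
  finally show ?thesis .
qed

section \<open>A right-Dini mean value inequality\<close>

lemma real_interval_right_induct:
  fixes a b :: real
  assumes "a \<le> b" and closed: "closed {r \<in> {a..b}. P r}" and "P a"
    and step: "\<And>s. s \<in> {a..<b} \<Longrightarrow> P s \<Longrightarrow> eventually (\<lambda>h. P (s + h)) (at_right 0)"
  shows "P b"
proof -
  define S where "S = {s \<in> {a..b}. \<forall>r \<in> {a..s}. P r}"
  define c where "c = Sup S"
  have "a \<in> S" using assms unfolding S_def by auto
  have bdd: "bdd_above S" unfolding S_def by (auto intro: bdd_aboveI[of _ b])
  have "a \<le> c" "c \<le> b"
    unfolding c_def using \<open>a \<in> S\<close> bdd by (auto intro!: cSup_upper cSup_least simp: S_def)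
  have below_c: "P r" if "r \<in> {a..<c}" for r
  proof -
    have "r < Sup S" using that unfolding c_def by simp
    then obtain s where "s \<in> S" "r < s"
      using less_cSup_iff[OF _ bdd] \<open>a \<in> S\<close> by blast
    then show ?thesis using that unfolding S_def by auto
  qed
  have "c \<in> S"
  proof (cases "a = c")
    case False
    then have "{a..c} = closure {a..<c}" using \<open>a \<le> c\<close> by simp
    also have "\<dots> \<subseteq> {r \<in> {a..b}. P r}"
      using below_c \<open>c \<le> b\<close> by (intro closure_minimal[OF _ closed]) auto
    finally show ?thesis using \<open>a \<le> c\<close> \<open>c \<le> b\<close> unfolding S_def by auto
  qed (use \<open>a \<in> S\<close> in simp)
  have "\<not> c < b"
  proof
    assume "c < b"
    then have "eventually (\<lambda>h. P (c + h)) (at_right 0)"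
      using \<open>c \<in> S\<close> \<open>a \<le> c\<close> by (intro step) (auto simp: S_def)
    then obtain d where "d > 0" and d: "\<And>h. 0 < h \<Longrightarrow> h < d \<Longrightarrow> P (c + h)"
      unfolding eventually_at_right_field by auto
    define h where "h = min (d / 2) (b - c)"
    have "0 < h" "h < d" "c + h \<le> b" using \<open>d > 0\<close> \<open>c < b\<close> unfolding h_def by auto
    have "P r" if r: "r \<in> {a..c + h}" for r
    proof (cases "r \<le> c")
      case True
      then show ?thesis using \<open>c \<in> S\<close> r unfolding S_def by simp
    next
      case False
      then show ?thesis using d[of "r - c"] r \<open>h < d\<close> by simp
    qed
    then have "c + h \<in> S" using \<open>a \<le> c\<close> \<open>0 < h\<close> \<open>c + h \<le> b\<close> unfolding S_def by auto
    then have "c + h \<le> c" unfolding c_def using bdd by (rule cSup_upper)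
    then show False using \<open>0 < h\<close> by simp
  qed
  then show ?thesis using \<open>c \<in> S\<close> \<open>c \<le> b\<close> unfolding S_def by auto
qed

lemma norm_diff_le_of_right_increments:
  fixes \<phi> :: "real \<Rightarrow> 'a::real_normed_vector" and g :: "real \<Rightarrow> real"
  assumes "a \<le> b" and "continuous_on {a..b} \<phi>" and "continuous_on {a..b} g"
    and increments: "\<And>s e. s \<in> {a..<b} \<Longrightarrow> e > 0 \<Longrightarrow>
      eventually (\<lambda>h. norm (\<phi> (s + h) - \<phi> s) \<le> g (s + h) - g s + e * h) (at_right 0)"
  shows "norm (\<phi> b - \<phi> a) \<le> g b - g a"
proof (rule field_le_epsilon)
  fix e :: real
  assume "e > 0"
  define \<epsilon> where "\<epsilon> = e / (b - a + 1)"
  have "\<epsilon> > 0" and "\<epsilon> * (b - a) \<le> e"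
    using \<open>e > 0\<close> \<open>a \<le> b\<close> unfolding \<epsilon>_def by (auto simp: field_simps)
  define P where "P r \<longleftrightarrow> norm (\<phi> r - \<phi> a) \<le> g r - g a + \<epsilon> * (r - a)" for r
  have "P b"
  proof (rule real_interval_right_induct[OF \<open>a \<le> b\<close>])
    have "{r \<in> {a..b}. P r} = {a..b} \<inter> (\<lambda>r. g r - g a + \<epsilon> * (r - a) - norm (\<phi> r - \<phi> a)) -` {0..}"
      unfolding P_def by auto
    also have "closed \<dots>"
      using assms(2,3) by (intro continuous_closed_preimage) (auto intro!: continuous_intros)
    finally show "closed {r \<in> {a..b}. P r}" .
    show "P a" unfolding P_def by simp
  next
    fix s
    assume "s \<in> {a..<b}" and "P s"
    show "eventually (\<lambda>h. P (s + h)) (at_right 0)"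
      using increments[OF \<open>s \<in> {a..<b}\<close> \<open>\<epsilon> > 0\<close>]
    proof eventually_elim
      case (elim h)
      have "norm (\<phi> (s + h) - \<phi> a) \<le> norm (\<phi> (s + h) - \<phi> s) + norm (\<phi> s - \<phi> a)"
        by (rule norm_diff_triangle_le[of _ "\<phi> s"]) simp_all
      then show ?case using elim \<open>P s\<close> unfolding P_def by (simp add: algebra_simps)
    qed
  qed
  then show "norm (\<phi> b - \<phi> a) \<le> g b - g a + e"
    using \<open>\<epsilon> * (b - a) \<le> e\<close> unfolding P_def by simp
qed

section \<open>Variation of constants for integral solutions\<close>

lemma has_integral_increment_bound:
  fixes f x :: "real \<Rightarrow> 'a::banach"
  assumes "(f has_integral (x s - x a)) {a..s}" and "(f has_integral (x (s + h) - x a)) {a..s + h}"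
    and "a \<le> s" and "0 \<le> h"
    and bound: "\<And>r. r \<in> {s..s + h} \<Longrightarrow> norm (f r - c) \<le> K"
  shows "norm (x (s + h) - x s - h *\<^sub>R c) \<le> K * h"
proof -
  have int: "f integrable_on {s..s + h}"
    by (rule integrable_subinterval_real[OF has_integral_integrable[OF assms(2)]]) (use assms in auto)
  have "(f has_integral (x s - x a + integral {s..s + h} f)) {a..s + h}"
    by (rule has_integral_combine[OF _ _ assms(1) integrable_integral[OF int]]) (use assms in auto)
  from has_integral_unique[OF this assms(2)]
  have "integral {s..s + h} f = x (s + h) - x s" by (simp add: algebra_simps)
  with int have "(f has_integral (x (s + h) - x s)) {s..s + h}"
    by (simp add: has_integral_integrable_integral)
  then have "((\<lambda>r. f r - c) has_integral (x (s + h) - x s - h *\<^sub>R c)) {s..s + h}"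
    using has_integral_const_real[of c s "s + h"] \<open>0 \<le> h\<close> by (intro has_integral_diff) auto
  moreover have "0 \<le> K"
    using bound[of s] \<open>0 \<le> h\<close> by (meson atLeastAtMost_iff le_add_same_cancel1 norm_ge_zero order.trans order.refl)
  ultimately have "norm (x (s + h) - x s - h *\<^sub>R c) \<le> K * measure lborel {s..s + h}"
    using bound by (intro has_integral_bound_real[where S="{}"]) auto
  then show ?thesis using \<open>0 \<le> h\<close> by simp
qed

lemma integral_solution_continuous:
  fixes f x :: "real \<Rightarrow> 'a::banach"
  assumes "\<And>r. r \<in> {a..t} \<Longrightarrow> (f has_integral (x r - x a)) {a..r}"
  shows "continuous_on {a..t} x"
proof (cases "a \<le> t")
  case True
  then have "f integrable_on {a..t}" using assms[of t] by auto
  then have "continuous_on {a..t} (\<lambda>r. x a + integral {a..r} f)"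
    by (intro continuous_intros indefinite_integral_continuous_1)
  moreover have "x a + integral {a..r} f = x r" if "r \<in> {a..t}" for r
    using assms[OF that] by (simp add: integral_unique)
  ultimately show ?thesis by (rule continuous_on_eq)
qed simp

lemma integral_solution_right_increment:
  fixes F v x :: "real \<Rightarrow> 'a::banach"
  assumes sol: "\<And>r. r \<in> {0..t} \<Longrightarrow> ((\<lambda>r. F r + v r) has_integral (x r - x 0)) {0..r}"
    and "continuous_on {0..t} F" and v: "\<And>r. r \<in> {0..t} \<Longrightarrow> norm (v r) \<le> \<beta>"
    and "s \<in> {0..<t}" and "e > 0"
  shows "eventually (\<lambda>h. norm (x (s + h) - x s - h *\<^sub>R F s) \<le> (e + \<beta>) * h) (at_right 0)"
proof -
  obtain \<delta> where "\<delta> > 0" and \<delta>: "\<And>r. r \<in> {0..t} \<Longrightarrow> dist r s < \<delta> \<Longrightarrow> dist (F r) (F s) < e"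
    using \<open>continuous_on {0..t} F\<close> \<open>s \<in> {0..<t}\<close> \<open>e > 0\<close> unfolding continuous_on_iff by force
  have "eventually (\<lambda>h. 0 < h \<and> h < min \<delta> (t - s)) (at_right 0)"
    using \<open>\<delta> > 0\<close> \<open>s \<in> {0..<t}\<close> by (intro eventually_at_rightI[of 0 "min \<delta> (t - s)"]) auto
  then show ?thesis
  proof eventually_elim
    case (elim h)
    have "norm (F r + v r - F s) \<le> e + \<beta>" if "r \<in> {s..s + h}" for r
    proof -
      have "r \<in> {0..t}" "dist r s < \<delta>"
        using that elim \<open>s \<in> {0..<t}\<close> by (auto simp: dist_real_def)
      then have "norm (F r - F s) \<le> e" using \<delta> by (simp add: dist_norm less_imp_le)
      then show ?thesis using v[OF \<open>r \<in> {0..t}\<close>] norm_triangle_ineq[of "F r - F s" "v r"]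
        by (simp add: algebra_simps)
    qed
    then show ?case
      using elim \<open>s \<in> {0..<t}\<close> sol[of s] sol[of "s + h"]
      by (intro has_integral_increment_bound[of _ x s 0 h]) auto
  qed
qed

lemma mexp_decay_constant_ge_one:
  fixes A :: "real^'n::finite^'n"
  assumes "\<And>r. r \<ge> 0 \<Longrightarrow> mnorm2 (mexp (r *\<^sub>R A)) \<le> M * exp (- \<sigma> * r)"
  shows "1 \<le> M"
  using assms[of 0] by (simp add: mnorm2_mexp_zero)

lemma transported_solution_right_increment:
  fixes A :: "real^'n::finite^'n" and v x :: "real \<Rightarrow> real^'n" and t :: real
  defines "w \<equiv> \<lambda>s. endo_apply (exp ((t - s) *\<^sub>R endo_of_matrix A)) (x s)"
  assumes decay: "\<And>r. r \<ge> 0 \<Longrightarrow> mnorm2 (mexp (r *\<^sub>R A)) \<le> M * exp (- \<sigma> * r)"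
    and v: "\<And>s. s \<in> {0..t} \<Longrightarrow> norm (v s) \<le> \<beta>"
    and sol: "\<And>r. r \<in> {0..t} \<Longrightarrow> ((\<lambda>s. A *v x s + v s) has_integral (x r - x 0)) {0..r}"
    and "s \<in> {0..<t}" and "e > 0"
  shows "eventually (\<lambda>h. norm (w (s + h) - w s) \<le> (M * exp (- \<sigma> * (t - s)) * \<beta> + e) * h) (at_right 0)"
proof -
  define L where "L = endo_of_matrix A"
  define E where "E r = exp (r *\<^sub>R L)" for r
  define K where "K = M * exp (- \<sigma> * (t - s))"
  define e' where "e' = e / (2 * (K + 1))"
  have "1 \<le> M" using decay by (rule mexp_decay_constant_ge_one)
  then have "0 < K" unfolding K_def by simp
  then have "0 < e'" using \<open>e > 0\<close> unfolding e'_def by simp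
  have "K * (e' + \<beta>) < K * \<beta> + e"
    using \<open>0 < K\<close> \<open>e > 0\<close> unfolding e'_def by (simp add: field_simps add_pos_pos)
  moreover have "((\<lambda>h. M * exp (- \<sigma> * (t - s - h)) * (e' + \<beta> + norm (E h - 1 - h *\<^sub>R L) / h * norm (x s)))
      \<longlongrightarrow> K * (e' + \<beta> + 0 * norm (x s))) (at_right 0)"
  proof (intro tendsto_intros)
    show "((\<lambda>h. M * exp (- \<sigma> * (t - s - h))) \<longlongrightarrow> K) (at_right 0)"
      unfolding K_def by (auto intro!: tendsto_eq_intros)
    show "((\<lambda>h. norm (E h - 1 - h *\<^sub>R L) / h) \<longlongrightarrow> 0) (at_right 0)"
      unfolding E_def by (rule exp_scaleR_remainder_tendsto)
  qed
  ultimately have rate: "eventually (\<lambda>h. M * exp (- \<sigma> * (t - s - h))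
      * (e' + \<beta> + norm (E h - 1 - h *\<^sub>R L) / h * norm (x s)) < K * \<beta> + e) (at_right 0)"
    by (simp add: order_tendstoD(2))
  have "continuous_on {0..t} x"
    by (rule integral_solution_continuous) (rule sol)
  then have "continuous_on {0..t} (\<lambda>r. A *v x r)"
    by (rule bounded_linear.continuous_on[OF matrix_vector_mul_bounded_linear])
  from integral_solution_right_increment[OF sol this v \<open>s \<in> {0..<t}\<close> \<open>0 < e'\<close>]
  have increment: "eventually (\<lambda>h. norm (x (s + h) - x s - h *\<^sub>R (A *v x s)) \<le> (e' + \<beta>) * h) (at_right 0)" .
  have "eventually (\<lambda>h. 0 < h \<and> h \<le> t - s) (at_right 0)"
    using \<open>s \<in> {0..<t}\<close> by (intro eventually_at_rightI[of 0 "t - s"]) auto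
  with rate increment show ?thesis
  proof eventually_elim
    case (elim h)
    let ?R = "norm (E h - 1 - h *\<^sub>R L)"
    have "norm (w (s + h) - w s)
        \<le> norm (E (t - s - h)) * (norm (x (s + h) - x s - h *\<^sub>R (A *v x s)) + ?R * norm (x s))"
      using norm_transport_increment_le[of "t - s - h" L "x (s + h)" h "x s"]
      unfolding w_def E_def L_def diff_add_cancel diff_diff_eq[symmetric] endo_apply_endo_of_matrix .
    also have "\<dots> \<le> M * exp (- \<sigma> * (t - s - h)) * ((e' + \<beta>) * h + ?R / h * norm (x s) * h)"
      using elim decay[of "t - s - h"] \<open>1 \<le> M\<close>
      by (intro mult_mono add_left_mono) (auto simp: E_def L_def mnorm2_mexp endo_of_matrix_scaleR)
    also have "\<dots> = M * exp (- \<sigma> * (t - s - h)) * (e' + \<beta> + ?R / h * norm (x s)) * h"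
      by (simp add: algebra_simps)
    also have "\<dots> \<le> (K * \<beta> + e) * h"
      using elim by (intro mult_right_mono) auto
    finally show ?case unfolding K_def .
  qed
qed

lemma exp_increment_ge_tangent:
  fixes c \<sigma> u h :: real
  assumes "0 \<le> c"
  shows "c * exp (\<sigma> * u) * (\<sigma> * h) \<le> c * exp (\<sigma> * (u + h)) - c * exp (\<sigma> * u)"
proof -
  have "\<sigma> * h \<le> exp (\<sigma> * h) - 1"
    using exp_ge_add_one_self[of "\<sigma> * h"] by linarith
  then have "c * exp (\<sigma> * u) * (\<sigma> * h) \<le> c * exp (\<sigma> * u) * (exp (\<sigma> * h) - 1)"
    using assms by (intro mult_left_mono) auto
  then show ?thesis
    by (simp add: distrib_left exp_add algebra_simps)
qed

lemma matrix_integral_solution_norm_bound: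
  fixes A :: "real^'n::finite^'n" and v x :: "real \<Rightarrow> real^'n"
  assumes "\<sigma> > 0"
    and decay: "\<And>r. r \<ge> 0 \<Longrightarrow> mnorm2 (mexp (r *\<^sub>R A)) \<le> M * exp (- \<sigma> * r)"
    and v: "\<And>s. s \<in> {0..t} \<Longrightarrow> norm (v s) \<le> \<beta>"
    and sol: "\<And>r. r \<in> {0..t} \<Longrightarrow> ((\<lambda>s. A *v x s + v s) has_integral (x r - x 0)) {0..r}"
    and "0 \<le> t"
  shows "norm (x t) \<le> M * exp (- \<sigma> * t) * norm (x 0) + M * \<beta> / \<sigma> * (1 - exp (- \<sigma> * t))"
proof -
  define L where "L = endo_of_matrix A"
  define w where "w s = endo_apply (exp ((t - s) *\<^sub>R L)) (x s)" for s
  define g where "g s = M * \<beta> / \<sigma> * exp (\<sigma> * (s - t))" for s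
  have "1 \<le> M" using decay by (rule mexp_decay_constant_ge_one)
  have "0 \<le> \<beta>" using v[of 0] \<open>0 \<le> t\<close> by (simp add: order_trans[OF norm_ge_zero])
  have "norm (w t - w 0) \<le> g t - g 0"
  proof (rule norm_diff_le_of_right_increments[OF \<open>0 \<le> t\<close>])
    have "continuous_on UNIV (\<lambda>r. exp (r *\<^sub>R L))"
      by (rule continuous_on_vector_derivative) (rule exp_scaleR_has_vector_derivative_right)
    then have "continuous_on {0..t} (\<lambda>s. exp ((t - s) *\<^sub>R L))"
      by (rule continuous_on_compose2) (auto intro: continuous_intros)
    moreover have "continuous_on {0..t} x"
      by (rule integral_solution_continuous) (rule sol)
    ultimately show "continuous_on {0..t} w"
      unfolding w_def by (rule bounded_bilinear.continuous_on[OF bounded_bilinear_endo_apply])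
    show "continuous_on {0..t} g"
      unfolding g_def by (intro continuous_intros)
  next
    fix s e :: real
    assume "s \<in> {0..<t}" and "e > 0"
    have g_increment: "M * exp (- \<sigma> * (t - s)) * \<beta> * h \<le> g (s + h) - g s" for h
      using exp_increment_ge_tangent[of "M * \<beta> / \<sigma>" \<sigma> "s - t" h] \<open>\<sigma> > 0\<close> \<open>1 \<le> M\<close> \<open>0 \<le> \<beta>\<close>
      unfolding g_def by (simp add: algebra_simps)
    have "eventually (\<lambda>h. norm (w (s + h) - w s) \<le> (M * exp (- \<sigma> * (t - s)) * \<beta> + e) * h) (at_right 0)"
      unfolding w_def L_def using decay v sol \<open>s \<in> {0..<t}\<close> \<open>e > 0\<close>
      by (rule transported_solution_right_increment)
    with eventually_at_right_less[of 0]
    show "eventually (\<lambda>h. norm (w (s + h) - w s) \<le> g (s + h) - g s + e * h) (at_right 0)"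
    proof eventually_elim
      case (elim h)
      then show ?case using g_increment[of h] by (simp add: algebra_simps)
    qed
  qed
  moreover have "w t = x t"
    unfolding w_def by simp
  moreover have "norm (w 0) \<le> M * exp (- \<sigma> * t) * norm (x 0)"
    using decay[OF \<open>0 \<le> t\<close>] unfolding w_def L_def
    by (intro order_trans[OF norm_endo_apply] mult_right_mono) (simp_all add: mnorm2_mexp endo_of_matrix_scaleR)
  moreover have "g t - g 0 = M * \<beta> / \<sigma> * (1 - exp (- \<sigma> * t))"
    unfolding g_def by (simp add: algebra_simps)
  ultimately show ?thesis
    using norm_triangle_ineq[of "w 0" "w t - w 0"] by simp
qed

lemma relay_solution_integral_form:
  assumes "relay_solution A B C x"
  obtains v where "\<And>s. s \<ge> 0 \<Longrightarrow> norm (v s) \<le> norm B"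
    and "\<And>r. r \<ge> 0 \<Longrightarrow> ((\<lambda>s. A *v x s + v s) has_integral (x r - x 0)) {0..r}"
proof -
  obtain u where u: "\<forall>s\<ge>0. u s \<in> sign_set (C (x s))"
    and sol: "\<forall>r\<ge>0. ((\<lambda>s. A *v x s - u s *\<^sub>R B) has_integral (x r - x 0)) {0..r}"
    using assms unfolding relay_solution_def by blast
  show thesis
  proof (rule that[of "\<lambda>s. - u s *\<^sub>R B"])
    fix s :: real
    assume "s \<ge> 0"
    then have "\<bar>u s\<bar> \<le> 1"
      using u unfolding sign_set_def by (auto split: if_splits)
    then show "norm (- u s *\<^sub>R B) \<le> norm B"
      by (simp add: mult_left_le_one_le)
  next
    show "((\<lambda>s. A *v x s + - u s *\<^sub>R B) has_integral (x r - x 0)) {0..r}" if "r \<ge> 0" for r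
      using sol that by simp
  qed
qed

lemma exp_decay_lt_half:
  fixes M \<sigma> t :: real
  assumes "1 \<le> M" and "\<sigma> > 0" and "ln (2 * M) / \<sigma> < t"
  shows "0 < t" and "M * exp (- \<sigma> * t) < 1 / 2"
proof -
  have "0 \<le> ln (2 * M)" and ln_bound: "ln (2 * M) < \<sigma> * t"
    using assms by (simp_all add: field_simps)
  then show "0 < t"
    using \<open>\<sigma> > 0\<close> zero_less_mult_pos[of \<sigma> t] by simp
  have "2 * M < exp (\<sigma> * t)"
    using ln_bound \<open>1 \<le> M\<close> by (metis exp_less_cancel_iff exp_ln mult_pos_pos zero_less_numeral
        less_le_trans zero_less_one)
  then show "M * exp (- \<sigma> * t) < 1 / 2"
    by (simp add: exp_minus field_simps)
qed

theorem mainTheorem8: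
  fixes a b :: "nat \<Rightarrow> real"
    and M_initial sigma_slowest :: real
    and x :: "real \<Rightarrow> real^('n::{finite,linorder})"
  assumes "hurwitz (obs_canon a :: real^('n::{finite,linorder})^('n::{finite,linorder}))"
    and "M_initial > 0" and "sigma_slowest > 0"
    and "\<forall>t\<ge>0. mnorm2 (mexp (t *\<^sub>R (obs_canon a :: real^('n::{finite,linorder})^('n::{finite,linorder}))))
                   \<le> M_initial * exp (- sigma_slowest * t)"
    and "relay_solution (obs_canon a) (obs_B b) obs_C x"
    and "norm (x 0) \<le> 2 * M_initial * norm (obs_B b :: real^('n::{finite,linorder})) / sigma_slowest"
  shows "\<forall>t > ln (2 * M_initial) / sigma_slowest.
           norm (x t) \<le> 2 * M_initial * norm (obs_B b :: real^('n::{finite,linorder})) / sigma_slowest"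
proof (intro allI impI)
  fix t
  assume "t > ln (2 * M_initial) / sigma_slowest"
  let ?A = "obs_canon a :: ((real, 'n) vec, 'n) vec" and ?B = "obs_B b :: (real, 'n) vec"
  let ?M = M_initial and ?\<sigma> = sigma_slowest
  have decay: "\<And>r. r \<ge> 0 \<Longrightarrow> mnorm2 (mexp (r *\<^sub>R ?A)) \<le> ?M * exp (- ?\<sigma> * r)"
    using assms(4) by blast
  obtain v where v: "\<And>s. s \<ge> 0 \<Longrightarrow> norm (v s) \<le> norm ?B"
    and sol: "\<And>r. r \<ge> 0 \<Longrightarrow> ((\<lambda>s. ?A *v x s + v s) has_integral (x r - x 0)) {0..r}"
    using relay_solution_integral_form[OF assms(5)] by blast
  have "1 \<le> ?M" using decay by (rule mexp_decay_constant_ge_one)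
  then have "0 < t" and decayed: "?M * exp (- ?\<sigma> * t) < 1 / 2"
    using \<open>?\<sigma> > 0\<close> \<open>t > ln (2 * ?M) / ?\<sigma>\<close> by (rule exp_decay_lt_half)+
  have "norm (x t) \<le> ?M * exp (- ?\<sigma> * t) * norm (x 0) + ?M * norm ?B / ?\<sigma> * (1 - exp (- ?\<sigma> * t))"
    by (rule matrix_integral_solution_norm_bound[where v = v]) (use \<open>?\<sigma> > 0\<close> decay v sol \<open>0 < t\<close> in auto)
  moreover have "?M * exp (- ?\<sigma> * t) * norm (x 0) \<le> 1 / 2 * (2 * ?M * norm ?B / ?\<sigma>)"
    using assms(6) decayed by (intro mult_mono) auto
  moreover have "?M * norm ?B / ?\<sigma> * (1 - exp (- ?\<sigma> * t)) \<le> ?M * norm ?B / ?\<sigma>"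
    using \<open>?M > 0\<close> \<open>?\<sigma> > 0\<close> by (intro mult_left_le) auto
  ultimately show "norm (x t) \<le> 2 * ?M * norm ?B / ?\<sigma>"
    by linarith
qed

end
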